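(* Let $p$ be a smooth function on $T^\ast(\mathbb{R}^n)\smallsetminus0$ with $\operatorname{Re}p=\xi_1$, and let $\gamma=[a,b]\times\{w_0\}$ be a bicharacteristic of $\operatorname{Re}p=\xi_1$. If $\operatorname{Im}p$ strongly changes sign from $-$ to $+$ on $\gamma$, then $L_p(\gamma)$ is defined and $0\le L_p(\gamma)\le|\gamma|$. Moreover, for every $\delta,\varepsilon>0$ there exists a bicharacteristic $\tilde\gamma=[\tilde a,\tilde b]\times\{\tilde w\}$ of $\operatorname{Re}p$ with $a-\varepsilon<\tilde a\le\tilde b<b+\varepsilon$ and $|\tilde w-w_0|<\varepsilon$ such that $\operatorname{Im}p$ strongly changes sign from $-$ to $+$ on $\tilde\gamma$ and $|\tilde\gamma|<L_p(\gamma)+\delta$.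
   Context: Write points of $T^\ast(\mathbb{R}^n)$ as $(x_1,x',\xi_1,\xi')$. A bicharacteristic of $\xi_1$ is $\gamma=[a,b]\times\{w_0\}=\{(t,x',0,\xi'):a\le t\le b\}$, $w_0=(x',0,\xi')$; write $g(t,w)$; $|\gamma|=b-a$. For $\gamma_j=[a_j,b_j]\times\{w_j\}$, $\gamma_j\dashrightarrow\gamma$ means $\liminf a_j\ge a$, $\limsup b_j\le b$, $w_j\to w_0$. $\operatorname{Im}p$ strongly changes sign from $-$ to $+$ on $[a,b]\times\{w_0\}$ if $\operatorname{Im}p(t,w_0)=0$ for $a\le t\le b$ and for every $\varepsilon>0$ there exist $a-\varepsilon<s_-<a$, $b<s_+<b+\varepsilon$ with $\operatorname{Im}p(s_-,w_0)<0<\operatorname{Im}p(s_+,w_0)$. If some sequence of bicharacteristics $\gamma_j$ of $\xi_1$ with this sign change satisfies $\gamma_j\dashrightarrow\gamma$, then $L_p(\gamma)=\inf\liminf_j|\gamma_j|$ over all such sequences (otherwise undefined). *)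

theory Defs
  imports "HOL-Analysis.Analysis" "HOL-Library.Extended_Real"
begin

text \<open>Points of T*(R^n) are written ((x1, x'), (xi1, xi')) with x', xi' in R^(n-1),
  where R^(n-1) is the type real^'m.  The reduced point w = (x', xi') of the paper
  (with xi1 = 0) is an element of (real^'m) \<times> (real^'m).\<close>

type_synonym 'm cotan = "(real \<times> (real^'m)) \<times> (real \<times> (real^'m))"

definition cotan_minus_zero :: "'m::finite cotan set" where
  "cotan_minus_zero = {(x, \<xi>). \<xi> \<noteq> 0}"

text \<open>F vs is the iterated directional derivative along the
  directions in the list vs, F (v # vs) being the derivative of F vs in direction v.\<close>
definition smooth_on :: "'a::real_normed_vector set \<Rightarrow> ('a \<Rightarrow> 'b::real_normed_vector) \<Rightarrow> bool" where
  "smooth_on S f \<longleftrightarrow> open S \<and>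
     (\<exists>F :: 'a list \<Rightarrow> 'a \<Rightarrow> 'b.
        (\<forall>x\<in>S. F [] x = f x) \<and>
        (\<forall>vs. continuous_on S (F vs)) \<and>
        (\<forall>v vs. \<forall>x\<in>S. ((\<lambda>t. F vs (x + t *\<^sub>R v)) has_vector_derivative F (v # vs) x) (at 0)))"

definition gpt :: "real \<Rightarrow> (real^'m) \<times> (real^'m) \<Rightarrow> 'm::finite cotan" where
  "gpt t w = ((t, fst w), (0, snd w))"

text \<open>A bicharacteristic [a,b] \<times> {w} of xi1 in T*(R^n) minus 0 is encoded as the triple (a, b, w).\<close>
type_synonym 'm bichar = "real \<times> real \<times> ((real^'m) \<times> (real^'m))"

definition is_bichar :: "'m::finite bichar \<Rightarrow> bool" where
  "is_bichar \<gamma> = (case \<gamma> of (a, b, w) \<Rightarrow> a \<le> b \<and> snd w \<noteq> 0)"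

definition blen :: "'m::finite bichar \<Rightarrow> real" where
  "blen \<gamma> = (case \<gamma> of (a, b, w) \<Rightarrow> b - a)"

definition strongly_changes_sign :: "('m::finite cotan \<Rightarrow> real) \<Rightarrow> 'm bichar \<Rightarrow> bool" where
  "strongly_changes_sign q \<gamma> = (case \<gamma> of (a, b, w) \<Rightarrow>
     (\<forall>t\<in>{a..b}. q (gpt t w) = 0) \<and>
     (\<forall>\<epsilon>>0. \<exists>sm sp. a - \<epsilon> < sm \<and> sm < a \<and> b < sp \<and> sp < b + \<epsilon> \<and>
                      q (gpt sm w) < 0 \<and> 0 < q (gpt sp w)))"

definition bconv :: "(nat \<Rightarrow> 'm::finite bichar) \<Rightarrow> 'm bichar \<Rightarrow> bool" where
  "bconv \<Gamma> \<gamma> = (case \<gamma> of (a, b, w) \<Rightarrow>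
     ereal a \<le> liminf (\<lambda>j. ereal (fst (\<Gamma> j))) \<and>
     limsup (\<lambda>j. ereal (fst (snd (\<Gamma> j)))) \<le> ereal b \<and>
     (\<lambda>j. snd (snd (\<Gamma> j))) \<longlonglongrightarrow> w)"

definition Lp_set :: "('m::finite cotan \<Rightarrow> complex) \<Rightarrow> 'm bichar \<Rightarrow> ereal set" where
  "Lp_set p \<gamma> = {liminf (\<lambda>j. ereal (blen (\<Gamma> j))) | \<Gamma>.
      (\<forall>j. is_bichar (\<Gamma> j) \<and> strongly_changes_sign (\<lambda>z. Im (p z)) (\<Gamma> j)) \<and> bconv \<Gamma> \<gamma>}"

definition Lp_defined :: "('m::finite cotan \<Rightarrow> complex) \<Rightarrow> 'm bichar \<Rightarrow> bool" where
  "Lp_defined p \<gamma> \<longleftrightarrow> Lp_set p \<gamma> \<noteq> {}"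

definition Lp :: "('m::finite cotan \<Rightarrow> complex) \<Rightarrow> 'm bichar \<Rightarrow> ereal" where
  "Lp p \<gamma> = Inf (Lp_set p \<gamma>)"

end

theory Submission
  imports Defs
begin

text \<open>The constant sequence \<open>\<gamma>, \<gamma>, \<dots>\<close> is admissible for \<open>\<gamma>\<close> itself, so \<open>L\<^sub>p(\<gamma>)\<close> is defined
  and at most \<open>|\<gamma>|\<close>; it is nonnegative because lengths of bicharacteristics are.  Since
  \<open>L\<^sub>p(\<gamma>)\<close> is then finite, some admissible sequence has \<open>liminf |\<gamma>\<^sub>j| < L\<^sub>p(\<gamma>) + \<delta>\<close>; infinitely
  many of its members are shorter than \<open>L\<^sub>p(\<gamma>) + \<delta>\<close>, and all but finitely many lie
  \<open>\<epsilon>\<close>-close to \<open>\<gamma>\<close>, which yields \<open>\<tilde>\<gamma>\<close>.\<close>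

lemma Liminf_less_imp_frequently:
  fixes f :: "'a \<Rightarrow> 'b::complete_linorder"
  assumes "Liminf F f < c"
  shows "\<exists>\<^sub>F x in F. f x < c"
proof (rule ccontr)
  assume "\<not> (\<exists>\<^sub>F x in F. f x < c)"
  then have "\<forall>\<^sub>F x in F. c \<le> f x"
    by (simp add: not_frequently not_less)
  then have "c \<le> Liminf F f"
    by (rule Liminf_bounded)
  with assms show False
    by simp
qed

lemma blen_nonneg: "is_bichar \<gamma> \<Longrightarrow> 0 \<le> blen \<gamma>"
  by (auto simp: is_bichar_def blen_def split: prod.splits)

lemma bconv_const: "bconv (\<lambda>j. \<gamma>) \<gamma>"
  by (auto simp: bconv_def Liminf_const Limsup_const split: prod.splits)

lemma bconv_eventually_near:
  assumes "bconv \<Gamma> (a, b, w)" and "\<epsilon> > 0"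
  shows "\<forall>\<^sub>F j in sequentially. a - \<epsilon> < fst (\<Gamma> j) \<and> fst (snd (\<Gamma> j)) < b + \<epsilon> \<and>
           dist (snd (snd (\<Gamma> j))) w < \<epsilon>"
proof -
  have start: "ereal a \<le> liminf (\<lambda>j. ereal (fst (\<Gamma> j)))"
    and stop: "limsup (\<lambda>j. ereal (fst (snd (\<Gamma> j)))) \<le> ereal b"
    and point: "(\<lambda>j. snd (snd (\<Gamma> j))) \<longlonglongrightarrow> w"
    using assms(1) unfolding bconv_def by simp_all
  have "\<forall>\<^sub>F j in sequentially. ereal (a - \<epsilon>) < ereal (fst (\<Gamma> j))"
    using \<open>\<epsilon> > 0\<close> start by (intro less_LiminfD) (simp add: less_le_trans[of _ "ereal a"])
  moreover have "\<forall>\<^sub>F j in sequentially. ereal (fst (snd (\<Gamma> j))) < ereal (b + \<epsilon>)"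
    using \<open>\<epsilon> > 0\<close> stop by (intro Limsup_lessD) (simp add: le_less_trans[of _ "ereal b"])
  moreover have "\<forall>\<^sub>F j in sequentially. dist (snd (snd (\<Gamma> j))) w < \<epsilon>"
    using point \<open>\<epsilon> > 0\<close> by (rule tendstoD)
  ultimately show ?thesis
    by eventually_elim simp
qed

lemma Lp_setE:
  assumes "x \<in> Lp_set p \<gamma>"
  obtains \<Gamma> where "x = liminf (\<lambda>j. ereal (blen (\<Gamma> j)))"
    and "\<And>j. is_bichar (\<Gamma> j)" and "\<And>j. strongly_changes_sign (\<lambda>z. Im (p z)) (\<Gamma> j)"
    and "bconv \<Gamma> \<gamma>"
  using assms unfolding Lp_set_def by blast

lemma blen_mem_Lp_set:
  assumes "is_bichar \<gamma>" and "strongly_changes_sign (\<lambda>z. Im (p z)) \<gamma>"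
  shows "ereal (blen \<gamma>) \<in> Lp_set p \<gamma>"
proof -
  have "liminf (\<lambda>j. ereal (blen \<gamma>)) = ereal (blen \<gamma>)"
    by (simp add: Liminf_const)
  with assms bconv_const[of \<gamma>] show ?thesis
    unfolding Lp_set_def by (intro CollectI exI[of _ "\<lambda>j. \<gamma>"]) simp
qed

lemma Lp_nonneg: "0 \<le> Lp p \<gamma>"
  unfolding Lp_def
proof (rule Inf_greatest)
  fix x assume x_mem: "x \<in> Lp_set p \<gamma>"
  obtain \<Gamma> where x: "x = liminf (\<lambda>j. ereal (blen (\<Gamma> j)))" and bichar: "\<And>j. is_bichar (\<Gamma> j)"
    and "bconv \<Gamma> \<gamma>"
    using Lp_setE[OF x_mem] by blast
  from bichar have "\<forall>\<^sub>F j in sequentially. 0 \<le> ereal (blen (\<Gamma> j))"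
    by (simp add: blen_nonneg)
  then show "0 \<le> x"
    unfolding x by (rule Liminf_bounded)
qed

lemma Lp_set_approx:
  assumes "x \<in> Lp_set p (a, b, w)" and "x < c" and "\<epsilon> > 0"
  shows "\<exists>ta tb wt. is_bichar (ta, tb, wt) \<and>
    a - \<epsilon> < ta \<and> ta \<le> tb \<and> tb < b + \<epsilon> \<and> norm (wt - w) < \<epsilon> \<and>
    strongly_changes_sign (\<lambda>z. Im (p z)) (ta, tb, wt) \<and> ereal (blen (ta, tb, wt)) < c"
proof -
  obtain \<Gamma> where x: "x = liminf (\<lambda>j. ereal (blen (\<Gamma> j)))" and bichar: "\<And>j. is_bichar (\<Gamma> j)"
    and sign: "\<And>j. strongly_changes_sign (\<lambda>z. Im (p z)) (\<Gamma> j)" and conv: "bconv \<Gamma> (a, b, w)"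
    using Lp_setE[OF assms(1)] by blast
  have short: "\<exists>\<^sub>F j in sequentially. ereal (blen (\<Gamma> j)) < c"
    using assms(2) unfolding x by (rule Liminf_less_imp_frequently)
  have near: "\<forall>\<^sub>F j in sequentially. a - \<epsilon> < fst (\<Gamma> j) \<and> fst (snd (\<Gamma> j)) < b + \<epsilon> \<and>
      dist (snd (snd (\<Gamma> j))) w < \<epsilon>"
    using conv assms(3) by (rule bconv_eventually_near)
  obtain j where "ereal (blen (\<Gamma> j)) < c" "a - \<epsilon> < fst (\<Gamma> j)"
      "fst (snd (\<Gamma> j)) < b + \<epsilon>" "dist (snd (snd (\<Gamma> j))) w < \<epsilon>"
    using frequently_ex[OF frequently_eventually_conj[OF short near]] by blast
  with bichar[of j] sign[of j] show ?thesis
    by (cases "\<Gamma> j") (auto simp: is_bichar_def dist_norm)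
qed

theorem corollary2p12:
  fixes p :: "'m::finite cotan \<Rightarrow> complex"
    and a b :: real and w0 :: "(real^'m) \<times> (real^'m)"
  assumes smooth: "smooth_on cotan_minus_zero p"
    and re_p: "\<forall>z\<in>cotan_minus_zero. Re (p z) = fst (snd z)"
    and bich: "is_bichar (a, b, w0)"
    and sign: "strongly_changes_sign (\<lambda>z. Im (p z)) (a, b, w0)"
  shows "Lp_defined p (a, b, w0) \<and> 0 \<le> Lp p (a, b, w0) \<and> Lp p (a, b, w0) \<le> ereal (b - a) \<and>
    (\<forall>\<delta>>0. \<forall>\<epsilon>>0. \<exists>ta tb wt. is_bichar (ta, tb, wt) \<and>
        a - \<epsilon> < ta \<and> ta \<le> tb \<and> tb < b + \<epsilon> \<and> norm (wt - w0) < \<epsilon> \<and>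
        strongly_changes_sign (\<lambda>z. Im (p z)) (ta, tb, wt) \<and>
        ereal (blen (ta, tb, wt)) < Lp p (a, b, w0) + ereal \<delta>)"
proof -
  have mem: "ereal (b - a) \<in> Lp_set p (a, b, w0)"
    using blen_mem_Lp_set[OF bich sign] by (simp add: blen_def)
  then have upper: "Lp p (a, b, w0) \<le> ereal (b - a)"
    unfolding Lp_def by (rule Inf_lower)
  obtain r where r: "Lp p (a, b, w0) = ereal r"
    using Lp_nonneg[of p "(a, b, w0)"] upper by (cases "Lp p (a, b, w0)") auto
  have "\<exists>ta tb wt. is_bichar (ta, tb, wt) \<and>
        a - \<epsilon> < ta \<and> ta \<le> tb \<and> tb < b + \<epsilon> \<and> norm (wt - w0) < \<epsilon> \<and>
        strongly_changes_sign (\<lambda>z. Im (p z)) (ta, tb, wt) \<and>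
        ereal (blen (ta, tb, wt)) < Lp p (a, b, w0) + ereal \<delta>"
    if "\<delta> > 0" and "\<epsilon> > 0" for \<delta> \<epsilon>
  proof -
    have "Inf (Lp_set p (a, b, w0)) < Lp p (a, b, w0) + ereal \<delta>"
      using r \<open>\<delta> > 0\<close> by (simp flip: Lp_def)
    then obtain x where "x \<in> Lp_set p (a, b, w0)" and "x < Lp p (a, b, w0) + ereal \<delta>"
      by (auto simp: Inf_less_iff)
    then show ?thesis
      using \<open>\<epsilon> > 0\<close> by (rule Lp_set_approx)
  qed
  with mem upper Lp_nonneg show ?thesis
    unfolding Lp_defined_def by blast
qed

end
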